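(* Let $f,h:\mathbb{R}^d\to\mathbb{R}$ be Lipschitz with constants $L_f,L_h$, $a,b>0$, and $\widetilde Q=\{(x,s,t):h(x)\le as,\ f(x)+as\le bt\}$. Let $q\in\mathbb{R}^{d+2}$, $p_{k-1}\in\widetilde Q$, $r_{\mathrm{loc}}=\|p_{k-1}-q\|$, and let $p_*$ be a minimizer of $\|p-q\|$ over $\widetilde Q\cap\{p:\|p-q\|\le 2r_{\mathrm{loc}}\}$. Fix $c>1$ and set $\widetilde Q_{\mathrm{loc}}(c)=\widetilde Q\cap\{p:\|p-q\|\le cr_{\mathrm{loc}}\}$, $\widetilde C_h=\sqrt{L_h^2+a^2}$, $\widetilde C_f=\sqrt{L_f^2+a^2+b^2}$, $\mu=\min\{a/\widetilde C_h,\ b/\widetilde C_f\}$, $\lambda=2+a/b$, $\kappa=\frac{c-1}{\lambda+\mu}$, and $\bar p=p_*+(0,\Delta s,\frac ab\Delta s+\Delta t)$ with $\Delta s=\Delta t=\kappa r_{\mathrm{loc}}$ (here $0\in\mathbb{R}^d$). Then the closed ball of center $\bar p$ and radius $\kappa\mu r_{\mathrm{loc}}$ is contained in $\widetilde Q_{\mathrm{loc}}(c)$. In particular, $\mathrm{minwidth}(\widetilde Q_{\mathrm{loc}}(c))\ge2\kappa\mu r_{\mathrm{loc}}$ and $$\gamma(c):=\frac{cr_{\mathrm{loc}}}{\mathrm{minwidth}(\widetilde Q_{\mathrm{loc}}(c))}\le\frac{c(\lambda+\mu)}{(c-1)\mu}.$$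
   Context: $\mathrm{minwidth}(S)=\min_{\|w\|=1}(\max_{y\in S}w^\top y-\min_{y\in S}w^\top y)$. *)

theory Defs
  imports "HOL-Analysis.Analysis"
begin

definition minwidth :: "'a::euclidean_space set \<Rightarrow> real" where
  "minwidth S = (INF w\<in>{w. norm w = 1}. (SUP y\<in>S. w \<bullet> y) - (INF y\<in>S. w \<bullet> y))"

text \<open>The lifted set Q~ = {(x,s,t). h x \<le> a s, f x + a s \<le> b t} in R^(d+2),
  represented as the product (real^'d) \<times> real \<times> real (Euclidean norm).\<close>
definition Qtil :: "(real^'d \<Rightarrow> real) \<Rightarrow> (real^'d \<Rightarrow> real) \<Rightarrow> real \<Rightarrow> real
    \<Rightarrow> ((real^'d) \<times> real \<times> real) set" where
  "Qtil f h a b = {(x, s, t). h x \<le> a * s \<and> f x + a * s \<le> b * t}"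

end

theory Submission
  imports Defs
begin

text \<open>The two constraints of \<open>Qtil\<close> are sublevel sets \<open>{\<phi> \<le> 0}\<close> and \<open>{\<psi> \<le> 0}\<close> of
  \<open>\<phi>(x,s,t) = h x - a s\<close> and \<open>\<psi>(x,s,t) = f x + a s - b t\<close>, which by Cauchy-Schwarz are
  Lipschitz with constants \<open>Ch\<close> and \<open>Cf\<close>. Shifting \<open>pstar\<close> by \<open>(0, \<Delta>s, a/b \<Delta>s + \<Delta>t)\<close> lowers
  \<open>\<phi>\<close> by \<open>a \<Delta>s\<close> and \<open>\<psi>\<close> by \<open>b \<Delta>t\<close>, so the ball of radius \<open>\<kappa> \<mu> r\<close> around \<open>pbar\<close> stays
  feasible. Testing the minimality of \<open>pstar\<close> against \<open>pk\<close> gives \<open>norm (pstar - q) \<le> r\<close>, and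
  then the triangle inequality and the choice of \<open>\<kappa>\<close> keep the ball inside \<open>cball q (c r)\<close>.
  A ball of radius \<open>\<rho>\<close> inside a set makes its width in every unit direction at least \<open>2 \<rho>\<close>.\<close>

lemma lipschitz_on_plus_inner:
  fixes g :: "'a::real_normed_vector \<Rightarrow> real" and l :: "'b::real_inner"
  assumes "L-lipschitz_on UNIV g"
  shows "(sqrt (L\<^sup>2 + (norm l)\<^sup>2))-lipschitz_on UNIV (\<lambda>(x, y). g x + l \<bullet> y)"
proof (rule lipschitz_onI)
  fix p p' :: "'a \<times> 'b"
  obtain x y x' y' where p: "p = (x, y)" and p': "p' = (x', y')" by fastforce
  have "\<bar>g x + l \<bullet> y - (g x' + l \<bullet> y')\<bar> \<le> \<bar>g x - g x'\<bar> + \<bar>l \<bullet> (y - y')\<bar>"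
    by (simp add: inner_diff_right)
  also have "\<dots> \<le> L * dist x x' + norm l * dist y y'"
    using lipschitz_onD[OF assms, of x x'] Cauchy_Schwarz_ineq2[of l "y - y'"]
    by (simp add: dist_real_def dist_norm)
  also have "\<dots> = (L, norm l) \<bullet> (dist x x', dist y y')"
    by simp
  also have "\<dots> \<le> norm (L, norm l) * norm (dist x x', dist y y')"
    by (rule norm_cauchy_schwarz)
  also have "\<dots> = sqrt (L\<^sup>2 + (norm l)\<^sup>2) * dist p p'"
    by (simp add: p p' norm_Pair dist_Pair_Pair)
  finally show "dist ((\<lambda>(x, y). g x + l \<bullet> y) p) ((\<lambda>(x, y). g x + l \<bullet> y) p')
      \<le> sqrt (L\<^sup>2 + (norm l)\<^sup>2) * dist p p'"
    by (simp add: p p' dist_real_def)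
qed simp

lemma cball_subset_sublevel_if_lipschitz:
  fixes \<phi> :: "'a::metric_space \<Rightarrow> real"
  assumes "C-lipschitz_on UNIV \<phi>" and "\<phi> p + C * \<rho> \<le> 0"
  shows "cball p \<rho> \<subseteq> {y. \<phi> y \<le> 0}"
proof
  fix y assume "y \<in> cball p \<rho>"
  then have "C * dist y p \<le> C * \<rho>"
    using lipschitz_on_nonneg[OF assms(1)] by (simp add: dist_commute mult_left_mono)
  moreover have "\<phi> y - \<phi> p \<le> C * dist y p"
    using lipschitz_onD[OF assms(1), of y p] by (simp add: dist_real_def)
  ultimately show "y \<in> {y. \<phi> y \<le> 0}"
    using assms(2) by simp
qed

lemma minwidth_ge_of_cball_subset:
  fixes S :: "'a::euclidean_space set"
  assumes "bounded S" and "cball p \<rho> \<subseteq> S" and "\<rho> \<ge> 0"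
  shows "2 * \<rho> \<le> minwidth S"
  unfolding minwidth_def
proof (rule cINF_greatest)
  show "{w::'a. norm w = 1} \<noteq> {}"
    using nonempty_Basis norm_Basis by blast
next
  fix w :: 'a assume "w \<in> {w. norm w = 1}"
  then have w: "norm w = 1" by simp
  have "p + \<rho> *\<^sub>R w \<in> S" and "p - \<rho> *\<^sub>R w \<in> S"
    using assms(2,3) w by (auto simp: dist_norm)
  moreover have "bdd_above ((\<lambda>y. w \<bullet> y) ` S)" and "bdd_below ((\<lambda>y. w \<bullet> y) ` S)"
    using bounded_inner_imp_bdd_above[OF assms(1), of w] bounded_inner_imp_bdd_below[OF assms(1), of w]
    by (simp_all add: inner_commute)
  ultimately have "w \<bullet> (p + \<rho> *\<^sub>R w) \<le> (SUP y\<in>S. w \<bullet> y)"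
    and "(INF y\<in>S. w \<bullet> y) \<le> w \<bullet> (p - \<rho> *\<^sub>R w)"
    by (auto intro: cSUP_upper cINF_lower)
  then show "2 * \<rho> \<le> (SUP y\<in>S. w \<bullet> y) - (INF y\<in>S. w \<bullet> y)"
    using w by (simp add: inner_add_right inner_diff_right dot_square_norm)
qed

lemma mult_divide_le_divide:
  fixes c r w \<rho> :: real
  assumes "\<rho> * r \<le> w" and "0 < \<rho>" and "0 \<le> r" and "0 \<le> c"
  shows "c * r / w \<le> c / \<rho>"
proof (cases "r = 0")
  case False
  then have "0 < \<rho> * r"
    using assms(2,3) by simp
  moreover have "0 < w"
    using calculation assms(1) by linarith
  ultimately have "c * r / w \<le> c * r / (\<rho> * r)"
    using assms by (intro divide_left_mono) auto
  then show ?thesis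
    using False by simp
qed (use assms in simp)

lemma Qtil_eq_sublevels:
  "Qtil f h a b = {p. (\<lambda>(x, st). h x + (- a, 0) \<bullet> st) p \<le> 0}
                \<inter> {p. (\<lambda>(x, st). f x + (a, - b) \<bullet> st) p \<le> 0}"
  by (auto simp: Qtil_def)

lemma cball_shift_subset_Qtil:
  fixes f h :: "real^'d \<Rightarrow> real"
  assumes "Lf-lipschitz_on UNIV f" and "Lh-lipschitz_on UNIV h" and "b > 0"
    and "p \<in> Qtil f h a b"
    and "sqrt (Lh\<^sup>2 + a\<^sup>2) * \<rho> \<le> a * ds"
    and "sqrt (Lf\<^sup>2 + a\<^sup>2 + b\<^sup>2) * \<rho> \<le> b * dt"
  shows "cball (p + (0, ds, a / b * ds + dt)) \<rho> \<subseteq> Qtil f h a b"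
proof -
  obtain x s t where p: "p = (x, s, t)" by (cases p) auto
  have hx: "h x \<le> a * s" and fx: "f x + a * s \<le> b * t"
    using assms(4) by (auto simp: p Qtil_def)
  let ?pbar = "p + (0, ds, a / b * ds + dt)"
  have "(sqrt (Lh\<^sup>2 + a\<^sup>2))-lipschitz_on UNIV (\<lambda>(x, st). h x + (- a, 0 :: real) \<bullet> st)"
    using lipschitz_on_plus_inner[OF assms(2), of "(- a, 0 :: real)"] by (simp add: norm_Pair)
  moreover have "(\<lambda>(x, st). h x + (- a, 0 :: real) \<bullet> st) ?pbar + sqrt (Lh\<^sup>2 + a\<^sup>2) * \<rho> \<le> 0"
    using hx assms(5) by (simp add: p algebra_simps)
  moreover have "(sqrt (Lf\<^sup>2 + a\<^sup>2 + b\<^sup>2))-lipschitz_on UNIV (\<lambda>(x, st). f x + (a, - b) \<bullet> st)"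
    using lipschitz_on_plus_inner[OF assms(1), of "(a, - b)"] by (simp add: norm_Pair add.assoc)
  moreover have "(\<lambda>(x, st). f x + (a, - b) \<bullet> st) ?pbar + sqrt (Lf\<^sup>2 + a\<^sup>2 + b\<^sup>2) * \<rho> \<le> 0"
    using fx assms(3,6) by (simp add: p algebra_simps)
  ultimately show ?thesis
    unfolding Qtil_eq_sublevels by (blast dest: cball_subset_sublevel_if_lipschitz)
qed

lemma cball_shift_subset_cball:
  fixes p q :: "(real^'d) \<times> real \<times> real"
  assumes "norm (p - q) \<le> r" and "ds \<ge> 0" and "dt \<ge> 0" and "a / b \<ge> 0"
    and "r + (1 + a / b) * ds + dt + \<rho> \<le> R"
  shows "cball (p + (0, ds, a / b * ds + dt)) \<rho> \<subseteq> cball q R"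
proof -
  have "norm (0 :: real^'d, ds, a / b * ds + dt) \<le> norm ds + norm (a / b * ds + dt)"
    using norm_Pair_le[of ds "a / b * ds + dt"] by (simp add: norm_Pair)
  also have "\<dots> = (1 + a / b) * ds + dt"
    using assms(2-4) mult_nonneg_nonneg[OF assms(4,2)] by (simp add: distrib_right)
  finally have "dist (p + (0, ds, a / b * ds + dt)) q \<le> r + (1 + a / b) * ds + dt"
    using assms(1) norm_triangle_le[of "p - q" "(0 :: real^'d, ds, a / b * ds + dt)"]
    by (simp add: dist_norm algebra_simps)
  then show ?thesis
    using assms(5) by (simp add: cball_subset_cball_iff)
qed

lemma cball_subset_Qtil_inter_cball:
  fixes f h :: "real^'d \<Rightarrow> real"
  assumes "Lf-lipschitz_on UNIV f" and "Lh-lipschitz_on UNIV h" and "a > 0" and "b > 0"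
    and "p \<in> Qtil f h a b" and "norm (p - q) \<le> r" and "r \<ge> 0" and "c > 1"
    and "\<mu> > 0" and "sqrt (Lh\<^sup>2 + a\<^sup>2) * \<mu> \<le> a" and "sqrt (Lf\<^sup>2 + a\<^sup>2 + b\<^sup>2) * \<mu> \<le> b"
    and "\<kappa> = (c - 1) / (2 + a / b + \<mu>)"
  shows "cball (p + (0, \<kappa> * r, a / b * (\<kappa> * r) + \<kappa> * r)) (\<kappa> * \<mu> * r)
           \<subseteq> Qtil f h a b \<inter> cball q (c * r)"
proof -
  have "2 + a / b + \<mu> > 0"
    using assms(9) divide_pos_pos[OF assms(3,4)] by simp
  then have \<kappa>: "\<kappa> > 0" and \<kappa>_lam: "(2 + a / b + \<mu>) * \<kappa> = c - 1"
    using assms(8,12) by auto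
  have "r + (1 + a / b) * (\<kappa> * r) + \<kappa> * r + \<kappa> * \<mu> * r = r + ((2 + a / b + \<mu>) * \<kappa>) * r"
    by (simp add: algebra_simps)
  then have "cball (p + (0, \<kappa> * r, a / b * (\<kappa> * r) + \<kappa> * r)) (\<kappa> * \<mu> * r) \<subseteq> cball q (c * r)"
    using assms(3,4,6,7) \<kappa> unfolding \<kappa>_lam
    by (intro cball_shift_subset_cball) (auto simp: algebra_simps)
  moreover have "cball (p + (0, \<kappa> * r, a / b * (\<kappa> * r) + \<kappa> * r)) (\<kappa> * \<mu> * r) \<subseteq> Qtil f h a b"
    using assms(7,10,11) \<kappa>
    by (intro cball_shift_subset_Qtil[OF assms(1,2,4,5)])
       (auto simp: mult.assoc[symmetric] intro: mult_right_mono)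
  ultimately show ?thesis
    by blast
qed

theorem lemma27:
  fixes f h :: "real^'d \<Rightarrow> real"
    and Lf Lh a b c :: real
    and q pk pstar :: "(real^'d) \<times> real \<times> real"
  assumes "Lf-lipschitz_on UNIV f" and "Lh-lipschitz_on UNIV h"
    and "a > 0" and "b > 0"
    and "pk \<in> Qtil f h a b"
    and "pstar \<in> Qtil f h a b \<inter> {p. norm (p - q) \<le> 2 * norm (pk - q)}"
    and "\<forall>p \<in> Qtil f h a b \<inter> {p. norm (p - q) \<le> 2 * norm (pk - q)}.
           norm (pstar - q) \<le> norm (p - q)"
    and "c > 1"
  shows
    "let r = norm (pk - q);
         Qloc = Qtil f h a b \<inter> {p. norm (p - q) \<le> c * r};
         Ch = sqrt (Lh\<^sup>2 + a\<^sup>2);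
         Cf = sqrt (Lf\<^sup>2 + a\<^sup>2 + b\<^sup>2);
         mu = min (a / Ch) (b / Cf);
         lam = 2 + a / b;
         kappa = (c - 1) / (lam + mu);
         ds = kappa * r;
         dt = kappa * r;
         pbar = pstar + (0, ds, a / b * ds + dt)
     in cball pbar (kappa * mu * r) \<subseteq> Qloc
        \<and> minwidth Qloc \<ge> 2 * kappa * mu * r
        \<and> c * r / minwidth Qloc \<le> c * (lam + mu) / ((c - 1) * mu)"
proof -
  define r where "r = norm (pk - q)"
  define Ch where "Ch = sqrt (Lh\<^sup>2 + a\<^sup>2)"
  define Cf where "Cf = sqrt (Lf\<^sup>2 + a\<^sup>2 + b\<^sup>2)"
  define mu where "mu = min (a / Ch) (b / Cf)"
  define kappa where "kappa = (c - 1) / (2 + a / b + mu)"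
  define Qloc where "Qloc = Qtil f h a b \<inter> {p. norm (p - q) \<le> c * r}"
  define pbar where "pbar = pstar + (0, kappa * r, a / b * (kappa * r) + kappa * r)"
  have "a \<le> Ch" and "b \<le> Cf"
    unfolding Ch_def Cf_def by (auto intro: real_le_rsqrt)
  then have mu: "mu > 0" "Ch * mu \<le> a" "Cf * mu \<le> b"
    using assms(3,4) by (auto simp: mu_def min_def field_simps)
  have kappa: "kappa > 0"
    using assms(8) mu(1) divide_pos_pos[OF assms(3,4)] by (simp add: kappa_def)
  have r: "r \<ge> 0" and pstar: "pstar \<in> Qtil f h a b" "norm (pstar - q) \<le> r"
    using assms(5-7) by (auto simp: r_def)
  have Qloc: "Qloc = Qtil f h a b \<inter> cball q (c * r)"
    by (auto simp: Qloc_def dist_norm norm_minus_commute)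
  have ball: "cball pbar (kappa * mu * r) \<subseteq> Qloc"
    unfolding Qloc pbar_def using mu[unfolded Ch_def Cf_def]
    by (rule cball_subset_Qtil_inter_cball[OF assms(1-4) pstar r assms(8) _ _ _ kappa_def])
  then have width: "2 * (kappa * mu * r) \<le> minwidth Qloc"
    using kappa mu r by (intro minwidth_ge_of_cball_subset) (auto simp: Qloc bounded_Int)
  moreover have "0 \<le> kappa * mu * r"
    using kappa mu r by simp
  ultimately have "kappa * mu * r \<le> minwidth Qloc"
    by linarith
  then have "c * r / minwidth Qloc \<le> c / (kappa * mu)"
    using kappa mu r assms(8) by (intro mult_divide_le_divide) auto
  also have "\<dots> = c * (2 + a / b + mu) / ((c - 1) * mu)"
    using assms(8) by (simp add: kappa_def)
  finally have "c * r / minwidth Qloc \<le> c * (2 + a / b + mu) / ((c - 1) * mu)" .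
  then show ?thesis
    using ball[unfolded pbar_def] width unfolding Let_def
    by (simp flip: r_def Ch_def Cf_def mu_def kappa_def Qloc_def add: mult.assoc)
qed

end
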